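(* Let $\{(X_s,\tau_s):s\in S\}$ be a family of fuzzifying topological spaces, $X=\prod_{s\in S}X_s$, and let $\Pi=\prod_{s\in S}(\tau_P)_s\in\Im(P(X))$ be the product pre-open family described below. Then $$\sup_{U\subseteq X}\min\Big(\Gamma(U,\Pi/U),\ \sup_{x\in X}N^\Pi_x(U)\Big)\ \le\ \sup_{T\subseteq S,\ T\text{ finite}}\ \inf_{t\in S\setminus T}\Gamma(X_t,(\tau_P)_t).$$
   Context: Fuzzy subsets of $Y$ are maps $Y\to[0,1]$ ($\Im(Y)$); $P(X)$ is the power set. A fuzzifying topology on a set $Z$ is $\tau\in\Im(P(Z))$ with $\tau(Z)=1$, closed (in degree) under finite intersections ($\tau(A\cap B)\ge\min$) and arbitrary unions ($\tau(\bigcup A_\lambda)\ge\inf$). For such $\tau$: $N_x(A)=\sup_{x\in B\subseteq A}\tau(B)$, $Cl(A)(x)=1-N_x(Z\setminus A)$, for $\mu\in\Im(Z)$ $Int(\mu)(x)=\sup_{x\in B}\min(\tau(B),\inf_{y\in B}\mu(y))$, and the fuzzifying pre-open sets are $\tau_P(A)=\inf_{x\in A}Int(Cl(A))(x)$. For the product: $p_s:X\to X_s$ are projections, $\varphi=\{p_s^{-1}(U_s):s\in S,U_s\subseteq X_s\}$; a finite $\Phi\subseteq\varphi$ is written $\Phi=\{p_s^{-1}(V_s):s\in S(\Phi)\}$; $\beta_P(V)=\sup\{\inf_{s\in S(\Phi)}(\tau_P)_s(V_s):\Phi\subseteq\varphi\text{ finite},\ \bigcap\Phi=V\}$, and $\Pi(A)=\sup\{\inf_\lambda\beta_P(B_\lambda):\bigcup_\lambda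 B_\lambda=A\}$. $N^\Pi_x(U)=\sup_{x\in V\subseteq U}\Pi(V)$. For $U\subseteq X$, $(\Pi/U)(B)=\sup\{\Pi(V):V\cap U=B\}$. Compactness degree: for a set $A$ and $\rho\in\Im(P(A))$, with $K(\Re,A)=\inf_{x\in A}\sup_{B\ni x}\Re(B)$, $[\Re\subseteq\rho]=\inf_B\min(1,1-\Re(B)+\rho(B))$, $\wp\le\Re$ meaning pointwise $\le$, and $FF(\wp)=1-\inf\{\delta\in[0,1]:\{B:\wp(B)>\delta\}\text{ finite}\}$, set $\Gamma(A,\rho)=\inf_{\Re\in\Im(P(A))}\min\big(1,1-\max(0,K(\Re,A)+[\Re\subseteq\rho]-1)+\sup_{\wp\le\Re}\max(0,K(\wp,A)+FF(\wp)-1)\big)$. Thus $\Gamma(X_t,(\tau_P)_t)$ is the degree of fuzzifying strong compactness of $(X_t,\tau_t)$. *)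

theory Defs
  imports Main "HOL-Library.FuncSet" Complex_Main
begin

definition fsup :: "real set \<Rightarrow> real" where
  "fsup A = (if A = {} then 0 else Sup A)"
definition finf :: "real set \<Rightarrow> real" where
  "finf A = (if A = {} then 1 else Inf A)"

text \<open>A fuzzy subset of P(Z): a map into [0,1] (only values on subsets of Z matter).\<close>
definition fuzzy_on_pow :: "'a set \<Rightarrow> ('a set \<Rightarrow> real) \<Rightarrow> bool" where
  "fuzzy_on_pow Z R \<longleftrightarrow> (\<forall>B. B \<subseteq> Z \<longrightarrow> 0 \<le> R B \<and> R B \<le> 1)"

definition fuzzifying_topology :: "'a set \<Rightarrow> ('a set \<Rightarrow> real) \<Rightarrow> bool" where
  "fuzzifying_topology Z \<tau> \<longleftrightarrow>
     fuzzy_on_pow Z \<tau> \<and> \<tau> Z = 1 \<and>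
     (\<forall>A B. A \<subseteq> Z \<longrightarrow> B \<subseteq> Z \<longrightarrow> \<tau> (A \<inter> B) \<ge> min (\<tau> A) (\<tau> B)) \<and>
     (\<forall>F. F \<subseteq> Pow Z \<longrightarrow> \<tau> (\<Union>F) \<ge> finf (\<tau> ` F))"

definition fnbhd :: "('a set \<Rightarrow> real) \<Rightarrow> 'a \<Rightarrow> 'a set \<Rightarrow> real" where
  "fnbhd \<tau> x A = fsup {\<tau> B | B. x \<in> B \<and> B \<subseteq> A}"

definition fcl :: "'a set \<Rightarrow> ('a set \<Rightarrow> real) \<Rightarrow> 'a set \<Rightarrow> 'a \<Rightarrow> real" where
  "fcl Z \<tau> A x = 1 - fnbhd \<tau> x (Z - A)"

definition fint :: "'a set \<Rightarrow> ('a set \<Rightarrow> real) \<Rightarrow> ('a \<Rightarrow> real) \<Rightarrow> 'a \<Rightarrow> real" where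
  "fint Z \<tau> \<mu> x = fsup {min (\<tau> B) (finf (\<mu> ` B)) | B. x \<in> B \<and> B \<subseteq> Z}"

definition preopen :: "'a set \<Rightarrow> ('a set \<Rightarrow> real) \<Rightarrow> 'a set \<Rightarrow> real" where
  "preopen Z \<tau> A = finf {fint Z \<tau> (fcl Z \<tau> A) x | x. x \<in> A}"

text \<open>Subbase-generated base \<open>\<beta>_P\<close> of the product: finite families of cylinders
  \<open>p_s^{-1}(V_s)\<close>, \<open>s \<in> T\<close> (T finite), with intersection V (empty intersection = X).\<close>
definition prod_beta :: "'s set \<Rightarrow> ('s \<Rightarrow> 'a set) \<Rightarrow> ('s \<Rightarrow> 'a set \<Rightarrow> real)
    \<Rightarrow> ('s \<Rightarrow> 'a) set \<Rightarrow> real" where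
  "prod_beta S Xs \<tau> V = fsup {finf {preopen (Xs s) (\<tau> s) (Vs s) | s. s \<in> T} | T Vs.
      finite T \<and> T \<subseteq> S \<and> (\<forall>s\<in>T. Vs s \<subseteq> Xs s) \<and>
      {f \<in> PiE S Xs. \<forall>s\<in>T. f s \<in> Vs s} = V}"

definition prod_pre :: "'s set \<Rightarrow> ('s \<Rightarrow> 'a set) \<Rightarrow> ('s \<Rightarrow> 'a set \<Rightarrow> real)
    \<Rightarrow> ('s \<Rightarrow> 'a) set \<Rightarrow> real" where
  "prod_pre S Xs \<tau> A = fsup {finf (prod_beta S Xs \<tau> ` \<B>) | \<B>. \<Union>\<B> = A}"

definition frestrict :: "'a set \<Rightarrow> ('a set \<Rightarrow> real) \<Rightarrow> 'a set \<Rightarrow> 'a set \<Rightarrow> real" where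
  "frestrict X P U B = fsup {P V | V. V \<subseteq> X \<and> V \<inter> U = B}"

definition Kdeg :: "('a set \<Rightarrow> real) \<Rightarrow> 'a set \<Rightarrow> real" where
  "Kdeg R A = finf {fsup {R B | B. x \<in> B \<and> B \<subseteq> A} | x. x \<in> A}"

definition fincl :: "'a set \<Rightarrow> ('a set \<Rightarrow> real) \<Rightarrow> ('a set \<Rightarrow> real) \<Rightarrow> real" where
  "fincl A R \<rho> = finf {min 1 (1 - R B + \<rho> B) | B. B \<subseteq> A}"

definition FF :: "'a set \<Rightarrow> ('a set \<Rightarrow> real) \<Rightarrow> real" where
  "FF A W = 1 - finf {\<delta>. 0 \<le> \<delta> \<and> \<delta> \<le> 1 \<and> finite {B. B \<subseteq> A \<and> W B > \<delta>}}"

definition Gamma :: "'a set \<Rightarrow> ('a set \<Rightarrow> real) \<Rightarrow> real" where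
  "Gamma A \<rho> = finf {min 1 (1 - max 0 (Kdeg R A + fincl A R \<rho> - 1)
        + fsup {max 0 (Kdeg W A + FF A W - 1) | W.
                  fuzzy_on_pow A W \<and> (\<forall>B. B \<subseteq> A \<longrightarrow> W B \<le> R B)}) | R.
        fuzzy_on_pow A R}"

end

theory Submission
  imports Defs
begin

(* If U has positive neighbourhood degree at some point, some basic cylinder through that point
   lies inside U, and it constrains only a finite set T of coordinates. For every t outside T the
   projection p_t therefore maps U onto X_t, and it is continuous from (U, \<Pi>/U) to
   (X_t, (\<tau>_P)_t) because the preimage of a pre-open set is a subbasic cylinder. Compactness
   degree does not decrease along continuous surjections: a fuzzy cover R of X_t pulls back to the
   family on U that copies R onto the saturated sets and vanishes elsewhere; it covers U to the same
   degree, is contained in \<Pi>/U at least as much as R is in (\<tau>_P)_t, and its subfamilies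
   correspond to those of R with equal covering and finiteness degrees. *)

lemma fsup_least: "(\<And>a. a \<in> A \<Longrightarrow> a \<le> c) \<Longrightarrow> 0 \<le> c \<Longrightarrow> fsup A \<le> c"
  unfolding fsup_def by (auto intro: cSup_least)

lemma fsup_upper: "a \<in> A \<Longrightarrow> A \<subseteq> {0..1} \<Longrightarrow> a \<le> fsup A"
  unfolding fsup_def by (auto intro!: cSup_upper bdd_aboveI[where M = 1])

lemma finf_greatest: "(\<And>a. a \<in> A \<Longrightarrow> c \<le> a) \<Longrightarrow> c \<le> 1 \<Longrightarrow> c \<le> finf A"
  unfolding finf_def by (auto intro: cInf_greatest)

lemma finf_lower: "a \<in> A \<Longrightarrow> A \<subseteq> {0..1} \<Longrightarrow> finf A \<le> a"
  unfolding finf_def by (auto intro!: cInf_lower bdd_belowI[where m = 0])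

lemma fsup_in_unit: "A \<subseteq> {0..1} \<Longrightarrow> fsup A \<in> {0..1}"
proof (cases "A = {}")
  case False
  then obtain a where "a \<in> A" by blast
  moreover assume "A \<subseteq> {0..1}"
  ultimately show ?thesis
    using fsup_upper[of a A] fsup_least[of A 1] by force
qed (simp add: fsup_def)

lemma finf_in_unit: "A \<subseteq> {0..1} \<Longrightarrow> finf A \<in> {0..1}"
proof (cases "A = {}")
  case False
  then obtain a where "a \<in> A" by blast
  moreover assume "A \<subseteq> {0..1}"
  ultimately show ?thesis
    using finf_lower[of a A] finf_greatest[of A 0] by force
qed (simp add: finf_def)

lemma fsup_posE:
  assumes "0 < fsup A"
  obtains a where "a \<in> A" "0 < a"
  using assms fsup_least[of A 0] by force

lemma fsup_le_fsup:
  assumes "\<And>a. a \<in> A \<Longrightarrow> a \<le> 0 \<or> (\<exists>b\<in>B. a \<le> b)" and "B \<subseteq> {0..1}"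
  shows "fsup A \<le> fsup B"
  using assms fsup_in_unit[OF assms(2)] fsup_upper[OF _ assms(2)]
  by (intro fsup_least) (force+)

lemma finf_le_finf:
  assumes "\<And>b. b \<in> B \<Longrightarrow> 1 \<le> b \<or> (\<exists>a\<in>A. a \<le> b)" and "A \<subseteq> {0..1}"
  shows "finf A \<le> finf B"
  using assms finf_in_unit[OF assms(2)] finf_lower[OF _ assms(2)]
  by (intro finf_greatest) (force+)

definition subcover_degree :: "'a set \<Rightarrow> ('a set \<Rightarrow> real) \<Rightarrow> real" where
  "subcover_degree A R = fsup {max 0 (Kdeg W A + FF A W - 1) | W.
      fuzzy_on_pow A W \<and> (\<forall>B. B \<subseteq> A \<longrightarrow> W B \<le> R B)}"

definition Gamma_at :: "'a set \<Rightarrow> ('a set \<Rightarrow> real) \<Rightarrow> ('a set \<Rightarrow> real) \<Rightarrow> real" where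
  "Gamma_at A \<rho> R = min 1 (1 - max 0 (Kdeg R A + fincl A R \<rho> - 1) + subcover_degree A R)"

lemma Gamma_eq_finf_Gamma_at: "Gamma A \<rho> = finf {Gamma_at A \<rho> R | R. fuzzy_on_pow A R}"
  unfolding Gamma_def Gamma_at_def subcover_degree_def ..

lemma Kdeg_in_unit: "fuzzy_on_pow A R \<Longrightarrow> Kdeg R A \<in> {0..1}"
  unfolding Kdeg_def fuzzy_on_pow_def
  by (rule finf_in_unit) (auto intro!: fsup_in_unit)

lemma FF_in_unit: "FF A W \<in> {0..1}"
proof -
  have "finf {\<delta>. 0 \<le> \<delta> \<and> \<delta> \<le> 1 \<and> finite {B. B \<subseteq> A \<and> W B > \<delta>}} \<in> {0..1}"
    by (rule finf_in_unit) auto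
  then show ?thesis unfolding FF_def by auto
qed

lemma fincl_in_unit: "fuzzy_on_pow A R \<Longrightarrow> fuzzy_on_pow A \<rho> \<Longrightarrow> fincl A R \<rho> \<in> {0..1}"
  unfolding fincl_def fuzzy_on_pow_def by (rule finf_in_unit) force

lemma subcover_candidates_in_unit:
  "{max 0 (Kdeg W A + FF A W - 1) | W. fuzzy_on_pow A W \<and> (\<forall>B. B \<subseteq> A \<longrightarrow> W B \<le> R B)}
    \<subseteq> {0..1}"
proof clarify
  fix W assume "fuzzy_on_pow A W"
  then show "max 0 (Kdeg W A + FF A W - 1) \<in> {0..1}"
    using Kdeg_in_unit[of A W] FF_in_unit[of A W] by simp
qed

lemma subcover_degree_in_unit: "subcover_degree A R \<in> {0..1}"
  unfolding subcover_degree_def by (rule fsup_in_unit[OF subcover_candidates_in_unit])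

lemma Gamma_at_in_unit:
  "fuzzy_on_pow A R \<Longrightarrow> fuzzy_on_pow A \<rho> \<Longrightarrow> Gamma_at A \<rho> R \<in> {0..1}"
  using Kdeg_in_unit[of A R] fincl_in_unit[of A R \<rho>] subcover_degree_in_unit[of A R]
  unfolding Gamma_at_def by auto

lemma Gamma_in_unit: "fuzzy_on_pow A \<rho> \<Longrightarrow> Gamma A \<rho> \<in> {0..1}"
  unfolding Gamma_eq_finf_Gamma_at by (rule finf_in_unit) (blast dest: Gamma_at_in_unit)

lemma Kdeg_cong:
  assumes "\<And>B. B \<subseteq> A \<Longrightarrow> R B = R' B"
  shows "Kdeg R A = Kdeg R' A"
proof -
  have "{R B | B. x \<in> B \<and> B \<subseteq> A} = {R' B | B. x \<in> B \<and> B \<subseteq> A}" for x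
    using assms by (metis (lifting))
  then show ?thesis unfolding Kdeg_def by simp
qed

lemma FF_cong:
  assumes "\<And>B. B \<subseteq> A \<Longrightarrow> W B = W' B"
  shows "FF A W = FF A W'"
proof -
  have "{B. B \<subseteq> A \<and> W B > \<delta>} = {B. B \<subseteq> A \<and> W' B > \<delta>}" for \<delta>
    using assms by auto
  then show ?thesis unfolding FF_def by simp
qed

definition fuzzy_preimage :: "'a set \<Rightarrow> ('a \<Rightarrow> 'b) \<Rightarrow> ('b set \<Rightarrow> real) \<Rightarrow> 'a set \<Rightarrow> real" where
  "fuzzy_preimage U f R B = (if B = U \<inter> f -` f ` B then R (f ` B) else 0)"

lemma fuzzy_preimage_vimage:
  assumes "f ` U = Y" and "W \<subseteq> Y"
  shows "fuzzy_preimage U f R (U \<inter> f -` W) = R W"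
proof -
  have "f ` (U \<inter> f -` W) = W" using assms by auto
  then show ?thesis unfolding fuzzy_preimage_def by simp
qed

lemma fuzzy_preimage_saturated: "B = U \<inter> f -` f ` B \<Longrightarrow> fuzzy_preimage U f R B = R (f ` B)"
  unfolding fuzzy_preimage_def by simp

lemma fuzzy_preimage_unsaturated: "B \<noteq> U \<inter> f -` f ` B \<Longrightarrow> fuzzy_preimage U f R B = 0"
  unfolding fuzzy_preimage_def by simp

lemma fuzzy_on_pow_fuzzy_preimage:
  assumes "f ` U = Y" and "fuzzy_on_pow Y R"
  shows "fuzzy_on_pow U (fuzzy_preimage U f R)"
  unfolding fuzzy_on_pow_def
proof (intro allI impI)
  fix B assume "B \<subseteq> U"
  then have "0 \<le> R (f ` B) \<and> R (f ` B) \<le> 1"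
    using assms unfolding fuzzy_on_pow_def by blast
  moreover have "fuzzy_preimage U f R B \<in> {0, R (f ` B)}"
    unfolding fuzzy_preimage_def by simp
  ultimately show "0 \<le> fuzzy_preimage U f R B \<and> fuzzy_preimage U f R B \<le> 1"
    by auto
qed

lemma fuzzy_preimage_subfamily:
  assumes "fuzzy_on_pow U V" and "\<forall>B. B \<subseteq> U \<longrightarrow> V B \<le> fuzzy_preimage U f R B" and "B \<subseteq> U"
  shows "fuzzy_preimage U f (\<lambda>W. V (U \<inter> f -` W)) B = V B"
proof (cases "B = U \<inter> f -` f ` B")
  case True
  then show ?thesis unfolding fuzzy_preimage_def by simp
next
  case False
  have "V B \<le> fuzzy_preimage U f R B"
    using assms(2,3) by blast
  also have "\<dots> = 0"
    using False unfolding fuzzy_preimage_def by simp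
  finally have "V B \<le> 0" .
  moreover have "0 \<le> V B"
    using assms(1,3) unfolding fuzzy_on_pow_def by simp
  ultimately show ?thesis using False unfolding fuzzy_preimage_def by simp
qed

lemma fsup_fuzzy_preimage_nbhds:
  assumes img: "f ` U = Y" and R: "fuzzy_on_pow Y R" and "u \<in> U"
  shows "fsup {fuzzy_preimage U f R B | B. u \<in> B \<and> B \<subseteq> U} = fsup {R W | W. f u \<in> W \<and> W \<subseteq> Y}"
proof (rule antisym)
  let ?P = "fuzzy_preimage U f R"
  show "fsup {?P B | B. u \<in> B \<and> B \<subseteq> U} \<le> fsup {R W | W. f u \<in> W \<and> W \<subseteq> Y}"
  proof (rule fsup_le_fsup)
    show "{R W | W. f u \<in> W \<and> W \<subseteq> Y} \<subseteq> {0..1}"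
      using R unfolding fuzzy_on_pow_def by auto
    fix a assume "a \<in> {?P B | B. u \<in> B \<and> B \<subseteq> U}"
    then obtain B where a: "a = ?P B" and B: "u \<in> B" "B \<subseteq> U" by blast
    show "a \<le> 0 \<or> (\<exists>b\<in>{R W | W. f u \<in> W \<and> W \<subseteq> Y}. a \<le> b)"
    proof (cases "B = U \<inter> f -` f ` B")
      case True
      then have "a = R (f ` B)" using a by (simp add: fuzzy_preimage_saturated)
      moreover have "f u \<in> f ` B" "f ` B \<subseteq> Y" using B img by auto
      ultimately show ?thesis by blast
    qed (simp add: a fuzzy_preimage_unsaturated)
  qed
  show "fsup {R W | W. f u \<in> W \<and> W \<subseteq> Y} \<le> fsup {?P B | B. u \<in> B \<and> B \<subseteq> U}"
  proof (rule fsup_le_fsup)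
    show "{?P B | B. u \<in> B \<and> B \<subseteq> U} \<subseteq> {0..1}"
      using fuzzy_on_pow_fuzzy_preimage[OF img R] unfolding fuzzy_on_pow_def by auto
    fix a assume "a \<in> {R W | W. f u \<in> W \<and> W \<subseteq> Y}"
    then obtain W where "a = R W" "f u \<in> W" "W \<subseteq> Y" by blast
    then have "a = ?P (U \<inter> f -` W)" "u \<in> U \<inter> f -` W"
      using fuzzy_preimage_vimage[OF img] \<open>u \<in> U\<close> by auto
    then show "a \<le> 0 \<or> (\<exists>b\<in>{?P B | B. u \<in> B \<and> B \<subseteq> U}. a \<le> b)"
      by blast
  qed
qed

lemma Kdeg_fuzzy_preimage:
  assumes img: "f ` U = Y" and R: "fuzzy_on_pow Y R"
  shows "Kdeg (fuzzy_preimage U f R) U = Kdeg R Y"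
proof -
  have "Kdeg R Y = finf ((\<lambda>y. fsup {R W | W. y \<in> W \<and> W \<subseteq> Y}) ` f ` U)"
    unfolding Kdeg_def Setcompr_eq_image img ..
  also have "\<dots> = finf ((\<lambda>u. fsup {fuzzy_preimage U f R B | B. u \<in> B \<and> B \<subseteq> U}) ` U)"
    unfolding image_image using fsup_fuzzy_preimage_nbhds[OF img R] by simp
  finally show ?thesis unfolding Kdeg_def Setcompr_eq_image ..
qed

lemma FF_fuzzy_preimage:
  assumes img: "f ` U = Y"
  shows "FF U (fuzzy_preimage U f R) = FF Y R"
proof -
  let ?P = "fuzzy_preimage U f R"
  have inj: "inj_on (\<lambda>W. U \<inter> f -` W) (Pow Y)"
    by (rule inj_on_inverseI[where g = "image f"]) (use img in auto)
  have levels: "{B. B \<subseteq> U \<and> ?P B > \<delta>} = (\<lambda>W. U \<inter> f -` W) ` {W. W \<subseteq> Y \<and> R W > \<delta>}"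
    if "0 \<le> \<delta>" for \<delta>
  proof (intro equalityI subsetI)
    fix B assume "B \<in> {B. B \<subseteq> U \<and> ?P B > \<delta>}"
    then have B: "B \<subseteq> U" "?P B > \<delta>" by auto
    then have sat: "B = U \<inter> f -` f ` B"
      using that fuzzy_preimage_unsaturated[of B U f R] by force
    then have "R (f ` B) > \<delta>" using B by (simp add: fuzzy_preimage_saturated)
    moreover have "f ` B \<subseteq> Y" using B img by auto
    ultimately show "B \<in> (\<lambda>W. U \<inter> f -` W) ` {W. W \<subseteq> Y \<and> R W > \<delta>}"
      using sat by blast
  next
    fix B assume "B \<in> (\<lambda>W. U \<inter> f -` W) ` {W. W \<subseteq> Y \<and> R W > \<delta>}"
    then obtain W where "W \<subseteq> Y" "R W > \<delta>" "B = U \<inter> f -` W" by blast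
    then show "B \<in> {B. B \<subseteq> U \<and> ?P B > \<delta>}"
      using fuzzy_preimage_vimage[OF img] by auto
  qed
  have finite_levels: "finite {B. B \<subseteq> U \<and> ?P B > \<delta>} \<longleftrightarrow> finite {W. W \<subseteq> Y \<and> R W > \<delta>}"
    if "0 \<le> \<delta>" for \<delta>
    unfolding levels[OF that] by (rule finite_image_iff) (rule inj_on_subset[OF inj], auto)
  show ?thesis unfolding FF_def by (simp add: finite_levels cong: conj_cong)
qed

lemma fincl_le_fincl_fuzzy_preimage:
  assumes img: "f ` U = Y" and R: "fuzzy_on_pow Y R"
    and \<rho>U: "fuzzy_on_pow U \<rho>U" and \<rho>Y: "fuzzy_on_pow Y \<rho>Y"
    and cont: "\<And>W. W \<subseteq> Y \<Longrightarrow> \<rho>Y W \<le> \<rho>U (U \<inter> f -` W)"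
  shows "fincl Y R \<rho>Y \<le> fincl U (fuzzy_preimage U f R) \<rho>U"
  unfolding fincl_def
proof (rule finf_le_finf)
  show "{min 1 (1 - R W + \<rho>Y W) | W. W \<subseteq> Y} \<subseteq> {0..1}"
  proof clarify
    fix W assume "W \<subseteq> Y"
    then have "0 \<le> R W" "R W \<le> 1" "0 \<le> \<rho>Y W"
      using R \<rho>Y unfolding fuzzy_on_pow_def by auto
    then show "min 1 (1 - R W + \<rho>Y W) \<in> {0..1}" by simp
  qed
  fix b assume "b \<in> {min 1 (1 - fuzzy_preimage U f R B + \<rho>U B) | B. B \<subseteq> U}"
  then obtain B where b: "b = min 1 (1 - fuzzy_preimage U f R B + \<rho>U B)" and "B \<subseteq> U"
    by blast
  show "1 \<le> b \<or> (\<exists>a\<in>{min 1 (1 - R W + \<rho>Y W) | W. W \<subseteq> Y}. a \<le> b)"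
  proof (cases "B = U \<inter> f -` f ` B")
    case True
    have "\<rho>Y (f ` B) \<le> \<rho>U B"
      using cont[of "f ` B"] True \<open>B \<subseteq> U\<close> img by auto
    then have "min 1 (1 - R (f ` B) + \<rho>Y (f ` B)) \<le> b"
      using True b by (simp add: fuzzy_preimage_saturated)
    moreover have "f ` B \<subseteq> Y" using \<open>B \<subseteq> U\<close> img by auto
    ultimately show ?thesis by blast
  next
    case False
    then show ?thesis
      using b \<rho>U \<open>B \<subseteq> U\<close> unfolding fuzzy_on_pow_def by (simp add: fuzzy_preimage_unsaturated)
  qed
qed

lemma subcover_degree_fuzzy_preimage_le:
  assumes img: "f ` U = Y" and R: "fuzzy_on_pow Y R"
  shows "subcover_degree U (fuzzy_preimage U f R) \<le> subcover_degree Y R"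
  unfolding subcover_degree_def
proof (rule fsup_le_fsup[OF _ subcover_candidates_in_unit])
  fix a assume "a \<in> {max 0 (Kdeg V U + FF U V - 1) | V.
      fuzzy_on_pow U V \<and> (\<forall>B. B \<subseteq> U \<longrightarrow> V B \<le> fuzzy_preimage U f R B)}"
  then obtain V where a: "a = max 0 (Kdeg V U + FF U V - 1)" and V: "fuzzy_on_pow U V"
    and V_le: "\<forall>B. B \<subseteq> U \<longrightarrow> V B \<le> fuzzy_preimage U f R B"
    by blast
  define V' where "V' W = V (U \<inter> f -` W)" for W
  have V_eq: "V B = fuzzy_preimage U f V' B" if "B \<subseteq> U" for B
    using fuzzy_preimage_subfamily[OF V V_le that] unfolding V'_def by simp
  have V': "fuzzy_on_pow Y V'"
    using V unfolding V'_def fuzzy_on_pow_def by (meson Int_lower1)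
  have "Kdeg V U = Kdeg (fuzzy_preimage U f V') U"
    by (rule Kdeg_cong) (rule V_eq)
  also have "\<dots> = Kdeg V' Y"
    by (rule Kdeg_fuzzy_preimage[OF img V'])
  finally have Kdeg_eq: "Kdeg V U = Kdeg V' Y" .
  have "FF U V = FF U (fuzzy_preimage U f V')"
    by (rule FF_cong) (rule V_eq)
  also have "\<dots> = FF Y V'"
    by (rule FF_fuzzy_preimage[OF img])
  finally have "a = max 0 (Kdeg V' Y + FF Y V' - 1)"
    unfolding a Kdeg_eq by simp
  moreover have "\<forall>B. B \<subseteq> Y \<longrightarrow> V' B \<le> R B"
    using V_le fuzzy_preimage_vimage[OF img] unfolding V'_def by (metis Int_lower1)
  ultimately show "a \<le> 0 \<or> (\<exists>b\<in>{max 0 (Kdeg W Y + FF Y W - 1) | W.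
      fuzzy_on_pow Y W \<and> (\<forall>B. B \<subseteq> Y \<longrightarrow> W B \<le> R B)}. a \<le> b)"
    using V' by blast
qed

lemma Gamma_le_Gamma_continuous_image:
  assumes img: "f ` U = Y" and \<rho>U: "fuzzy_on_pow U \<rho>U" and \<rho>Y: "fuzzy_on_pow Y \<rho>Y"
    and cont: "\<And>W. W \<subseteq> Y \<Longrightarrow> \<rho>Y W \<le> \<rho>U (U \<inter> f -` W)"
  shows "Gamma U \<rho>U \<le> Gamma Y \<rho>Y"
  unfolding Gamma_eq_finf_Gamma_at[of Y]
proof (rule finf_greatest)
  show "Gamma U \<rho>U \<le> 1" using Gamma_in_unit[OF \<rho>U] by simp
  fix a assume "a \<in> {Gamma_at Y \<rho>Y R | R. fuzzy_on_pow Y R}"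
  then obtain R where a: "a = Gamma_at Y \<rho>Y R" and R: "fuzzy_on_pow Y R" by blast
  let ?P = "fuzzy_preimage U f R"
  have P: "fuzzy_on_pow U ?P" by (rule fuzzy_on_pow_fuzzy_preimage[OF img R])
  have "Gamma U \<rho>U \<le> Gamma_at U \<rho>U ?P"
    unfolding Gamma_eq_finf_Gamma_at
  proof (rule finf_lower)
    show "Gamma_at U \<rho>U ?P \<in> {Gamma_at U \<rho>U R | R. fuzzy_on_pow U R}" using P by blast
    show "{Gamma_at U \<rho>U R | R. fuzzy_on_pow U R} \<subseteq> {0..1}"
      using Gamma_at_in_unit[OF _ \<rho>U] by blast
  qed
  also have "\<dots> \<le> Gamma_at Y \<rho>Y R"
    using Kdeg_fuzzy_preimage[OF img R] fincl_le_fincl_fuzzy_preimage[OF img R \<rho>U \<rho>Y cont]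
      subcover_degree_fuzzy_preimage_le[OF img R]
    unfolding Gamma_at_def by linarith
  finally show "Gamma U \<rho>U \<le> a" unfolding a .
qed

lemma fnbhd_in_unit: "fuzzy_on_pow Z \<tau> \<Longrightarrow> C \<subseteq> Z \<Longrightarrow> fnbhd \<tau> x C \<in> {0..1}"
  unfolding fnbhd_def fuzzy_on_pow_def by (rule fsup_in_unit) auto

lemma fcl_in_unit: "fuzzy_on_pow Z \<tau> \<Longrightarrow> fcl Z \<tau> A x \<in> {0..1}"
  unfolding fcl_def using fnbhd_in_unit[of Z \<tau> "Z - A" x] by auto

lemma fint_in_unit:
  assumes \<tau>: "fuzzy_on_pow Z \<tau>" and \<mu>: "\<And>y. \<mu> y \<in> {0..1}"
  shows "fint Z \<tau> \<mu> x \<in> {0..1}"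
  unfolding fint_def
proof (rule fsup_in_unit, clarify)
  fix B assume "B \<subseteq> Z"
  then have "\<tau> B \<in> {0..1}" using \<tau> unfolding fuzzy_on_pow_def by simp
  moreover have "finf (\<mu> ` B) \<in> {0..1}" using \<mu> by (intro finf_in_unit) (simp add: image_subset_iff)
  ultimately show "min (\<tau> B) (finf (\<mu> ` B)) \<in> {0..1}" by auto
qed

lemma preopen_in_unit:
  assumes "fuzzy_on_pow Z \<tau>"
  shows "preopen Z \<tau> A \<in> {0..1}"
  unfolding preopen_def
proof (rule finf_in_unit, clarify)
  fix x show "fint Z \<tau> (fcl Z \<tau> A) x \<in> {0..1}"
    by (rule fint_in_unit[OF assms fcl_in_unit[OF assms]])
qed

lemma fuzzy_on_pow_preopen: "fuzzy_on_pow Z \<tau> \<Longrightarrow> fuzzy_on_pow Z (preopen Z \<tau>)"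
  using preopen_in_unit[of Z \<tau>] unfolding fuzzy_on_pow_def[of Z "preopen Z \<tau>"] by simp

lemma finf_preopen_in_unit:
  assumes "\<forall>s\<in>S. fuzzy_on_pow (Xs s) (\<tau> s)" and "T \<subseteq> S"
  shows "finf {preopen (Xs s) (\<tau> s) (Vs s) | s. s \<in> T} \<in> {0..1}"
proof (rule finf_in_unit, clarify)
  fix s assume "s \<in> T"
  then show "preopen (Xs s) (\<tau> s) (Vs s) \<in> {0..1}"
    using assms by (blast intro: preopen_in_unit)
qed

lemma prod_beta_in_unit:
  assumes "\<forall>s\<in>S. fuzzy_on_pow (Xs s) (\<tau> s)"
  shows "prod_beta S Xs \<tau> V \<in> {0..1}"
  unfolding prod_beta_def
proof (rule fsup_in_unit, clarify)
  fix T :: "'a set" and Vs assume "T \<subseteq> S"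
  then show "finf {preopen (Xs s) (\<tau> s) (Vs s) | s. s \<in> T} \<in> {0..1}"
    by (rule finf_preopen_in_unit[OF assms])
qed

lemma prod_pre_in_unit:
  assumes "\<forall>s\<in>S. fuzzy_on_pow (Xs s) (\<tau> s)"
  shows "prod_pre S Xs \<tau> V \<in> {0..1}"
  unfolding prod_pre_def
proof (rule fsup_in_unit, clarify)
  fix \<B> show "finf (prod_beta S Xs \<tau> ` \<B>) \<in> {0..1}"
    using prod_beta_in_unit[OF assms] by (intro finf_in_unit) (simp add: image_subset_iff)
qed

lemma fuzzy_on_pow_frestrict:
  assumes "\<And>V. P V \<in> {0..1}"
  shows "fuzzy_on_pow U (frestrict X P U)"
  unfolding fuzzy_on_pow_def
proof (intro allI impI)
  fix B
  have "frestrict X P U B \<in> {0..1}"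
    unfolding frestrict_def using assms by (intro fsup_in_unit) auto
  then show "0 \<le> frestrict X P U B \<and> frestrict X P U B \<le> 1" by simp
qed

lemma fuzzy_on_pow_frestrict_prod_pre:
  "\<forall>s\<in>S. fuzzy_on_pow (Xs s) (\<tau> s) \<Longrightarrow> fuzzy_on_pow U (frestrict (PiE S Xs) (prod_pre S Xs \<tau>) U)"
  by (rule fuzzy_on_pow_frestrict) (rule prod_pre_in_unit)

lemma frestrict_ge: "V \<subseteq> X \<Longrightarrow> (\<And>V. P V \<in> {0..1}) \<Longrightarrow> P V \<le> frestrict X P U (V \<inter> U)"
  unfolding frestrict_def by (rule fsup_upper) auto

lemma prod_beta_le_prod_pre:
  assumes "\<forall>s\<in>S. fuzzy_on_pow (Xs s) (\<tau> s)"
  shows "prod_beta S Xs \<tau> V \<le> prod_pre S Xs \<tau> V"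
proof -
  have "prod_beta S Xs \<tau> V = finf (prod_beta S Xs \<tau> ` {V})" by (simp add: finf_def)
  also have "\<dots> \<le> prod_pre S Xs \<tau> V"
    unfolding prod_pre_def
  proof (rule fsup_upper)
    show "finf (prod_beta S Xs \<tau> ` {V}) \<in> {finf (prod_beta S Xs \<tau> ` \<B>) | \<B>. \<Union>\<B> = V}" by blast
    show "{finf (prod_beta S Xs \<tau> ` \<B>) | \<B>. \<Union>\<B> = V} \<subseteq> {0..1}"
      using prod_beta_in_unit[OF assms] by (auto intro!: finf_in_unit)
  qed
  finally show ?thesis .
qed

lemma preopen_le_prod_beta_cylinder:
  assumes \<tau>: "\<forall>s\<in>S. fuzzy_on_pow (Xs s) (\<tau> s)" and "t \<in> S" and "W \<subseteq> Xs t"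
  shows "preopen (Xs t) (\<tau> t) W \<le> prod_beta S Xs \<tau> {g \<in> PiE S Xs. g t \<in> W}"
proof -
  have "preopen (Xs t) (\<tau> t) W = finf {preopen (Xs s) (\<tau> s) W | s. s \<in> {t}}"
    by (simp add: finf_def)
  also have "\<dots> \<le> prod_beta S Xs \<tau> {g \<in> PiE S Xs. g t \<in> W}"
    unfolding prod_beta_def
  proof (rule fsup_upper)
    show "{finf {preopen (Xs s) (\<tau> s) (Vs s) | s. s \<in> T} | T Vs.
        finite T \<and> T \<subseteq> S \<and> (\<forall>s\<in>T. Vs s \<subseteq> Xs s) \<and>
        {g \<in> PiE S Xs. \<forall>s\<in>T. g s \<in> Vs s} = {g \<in> PiE S Xs. g t \<in> W}} \<subseteq> {0..1}"
      using finf_preopen_in_unit[OF \<tau>] by blast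
    show "finf {preopen (Xs s) (\<tau> s) W | s. s \<in> {t}} \<in> {finf {preopen (Xs s) (\<tau> s) (Vs s) | s. s \<in> T} | T Vs.
        finite T \<and> T \<subseteq> S \<and> (\<forall>s\<in>T. Vs s \<subseteq> Xs s) \<and>
        {g \<in> PiE S Xs. \<forall>s\<in>T. g s \<in> Vs s} = {g \<in> PiE S Xs. g t \<in> W}}"
      using assms(2,3) by (intro CollectI exI[of _ "{t}"] exI[of _ "\<lambda>_. W"]) auto
  qed
  finally show ?thesis .
qed

lemma preopen_le_frestrict_prod_pre:
  assumes \<tau>: "\<forall>s\<in>S. fuzzy_on_pow (Xs s) (\<tau> s)"
    and "t \<in> S" and "W \<subseteq> Xs t" and "U \<subseteq> PiE S Xs"
  shows "preopen (Xs t) (\<tau> t) W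
    \<le> frestrict (PiE S Xs) (prod_pre S Xs \<tau>) U (U \<inter> (\<lambda>u. u t) -` W)"
proof -
  let ?C = "{g \<in> PiE S Xs. g t \<in> W}"
  have "preopen (Xs t) (\<tau> t) W \<le> prod_beta S Xs \<tau> ?C"
    using preopen_le_prod_beta_cylinder[OF assms(1-3)] .
  also have "\<dots> \<le> prod_pre S Xs \<tau> ?C"
    by (rule prod_beta_le_prod_pre[OF \<tau>])
  also have "\<dots> \<le> frestrict (PiE S Xs) (prod_pre S Xs \<tau>) U (?C \<inter> U)"
    by (rule frestrict_ge[OF _ prod_pre_in_unit[OF \<tau>]]) blast
  also have "?C \<inter> U = U \<inter> (\<lambda>u. u t) -` W"
    using assms(4) by blast
  finally show ?thesis .
qed

lemma Gamma_subspace_le_Gamma_factor: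
  assumes \<tau>: "\<forall>s\<in>S. fuzzy_on_pow (Xs s) (\<tau> s)"
    and "U \<subseteq> PiE S Xs" and "t \<in> S" and "(\<lambda>u. u t) ` U = Xs t"
  shows "Gamma U (frestrict (PiE S Xs) (prod_pre S Xs \<tau>) U) \<le> Gamma (Xs t) (preopen (Xs t) (\<tau> t))"
proof (rule Gamma_le_Gamma_continuous_image[OF assms(4)])
  show "fuzzy_on_pow U (frestrict (PiE S Xs) (prod_pre S Xs \<tau>) U)"
    by (rule fuzzy_on_pow_frestrict_prod_pre[OF \<tau>])
  show "fuzzy_on_pow (Xs t) (preopen (Xs t) (\<tau> t))"
    using assms(1,3) by (simp add: fuzzy_on_pow_preopen)
  show "preopen (Xs t) (\<tau> t) W \<le> frestrict (PiE S Xs) (prod_pre S Xs \<tau>) U (U \<inter> (\<lambda>u. u t) -` W)"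
    if "W \<subseteq> Xs t" for W
    by (rule preopen_le_frestrict_prod_pre[OF \<tau> assms(3) that assms(2)])
qed

lemma prod_pre_pos_obtain_cylinder:
  assumes \<tau>: "\<forall>s\<in>S. fuzzy_on_pow (Xs s) (\<tau> s)"
    and pos: "0 < prod_pre S Xs \<tau> V" and "x \<in> V"
  obtains T where "finite T" "T \<subseteq> S" "\<And>g. g \<in> PiE S Xs \<Longrightarrow> (\<forall>s\<in>T. g s = x s) \<Longrightarrow> g \<in> V"
proof -
  obtain \<B> where \<B>: "\<Union>\<B> = V" and \<B>_pos: "0 < finf (prod_beta S Xs \<tau> ` \<B>)"
    using pos unfolding prod_pre_def by (auto elim: fsup_posE)
  then obtain B where B: "B \<in> \<B>" "x \<in> B" using \<open>x \<in> V\<close> by blast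
  have "finf (prod_beta S Xs \<tau> ` \<B>) \<le> prod_beta S Xs \<tau> B"
    using B(1) prod_beta_in_unit[OF \<tau>] by (intro finf_lower) (auto simp: image_subset_iff)
  then have "0 < prod_beta S Xs \<tau> B" using \<B>_pos by linarith
  then obtain T Vs where T: "finite T" "T \<subseteq> S"
    and cyl: "{g \<in> PiE S Xs. \<forall>s\<in>T. g s \<in> Vs s} = B"
    unfolding prod_beta_def by (auto elim: fsup_posE)
  show ?thesis
  proof (rule that[OF T])
    fix g assume "g \<in> PiE S Xs" "\<forall>s\<in>T. g s = x s"
    then have "g \<in> B" using B(2) cyl by auto
    then show "g \<in> V" using B(1) \<B> by blast
  qed
qed

lemma image_proj_eq_if_cylinder_subset:
  assumes "x \<in> PiE S Xs" and "t \<in> S - T" and "U \<subseteq> PiE S Xs"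
    and cyl: "\<And>g. g \<in> PiE S Xs \<Longrightarrow> (\<forall>s\<in>T. g s = x s) \<Longrightarrow> g \<in> U"
  shows "(\<lambda>u. u t) ` U = Xs t"
proof (intro equalityI subsetI)
  fix y assume "y \<in> (\<lambda>u. u t) ` U"
  then show "y \<in> Xs t" using assms(2,3) by (auto intro: PiE_mem)
next
  fix y assume "y \<in> Xs t"
  then have "x(t := y) \<in> PiE S Xs"
    using assms(1,2) PiE_fun_upd[of y Xs t x S] by (simp add: insert_absorb)
  then have "x(t := y) \<in> U" using assms(2) by (intro cyl) auto
  then show "y \<in> (\<lambda>u. u t) ` U" by (rule rev_image_eqI) simp
qed

lemma Gamma_subspace_le_cofinite_factors:
  assumes \<tau>: "\<forall>s\<in>S. fuzzy_on_pow (Xs s) (\<tau> s)" and U: "U \<subseteq> PiE S Xs"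
    and pos: "0 < fsup {fsup {prod_pre S Xs \<tau> V | V. x \<in> V \<and> V \<subseteq> U} | x. x \<in> PiE S Xs}"
  obtains T where "finite T" "T \<subseteq> S"
    "Gamma U (frestrict (PiE S Xs) (prod_pre S Xs \<tau>) U)
      \<le> finf {Gamma (Xs t) (preopen (Xs t) (\<tau> t)) | t. t \<in> S - T}"
proof -
  obtain x V where x: "x \<in> PiE S Xs" and V: "x \<in> V" "V \<subseteq> U" and V_pos: "0 < prod_pre S Xs \<tau> V"
    using pos by (auto elim!: fsup_posE)
  obtain T where T: "finite T" "T \<subseteq> S"
    and cyl: "\<And>g. g \<in> PiE S Xs \<Longrightarrow> (\<forall>s\<in>T. g s = x s) \<Longrightarrow> g \<in> V"
    using prod_pre_pos_obtain_cylinder[OF \<tau> V_pos V(1)] by blast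
  show ?thesis
  proof (rule that[OF T], rule finf_greatest, clarify)
    fix t assume t: "t \<in> S" "t \<notin> T"
    have "(\<lambda>u. u t) ` U = Xs t"
      using cyl V(2) t by (intro image_proj_eq_if_cylinder_subset[OF x _ U]) blast+
    then show "Gamma U (frestrict (PiE S Xs) (prod_pre S Xs \<tau>) U) \<le> Gamma (Xs t) (preopen (Xs t) (\<tau> t))"
      by (rule Gamma_subspace_le_Gamma_factor[OF \<tau> U t(1)])
  qed (use Gamma_in_unit[OF fuzzy_on_pow_frestrict_prod_pre[OF \<tau>]] in simp)
qed

theorem theorem3p2:
  fixes S :: "'s set" and Xs :: "'s \<Rightarrow> 'a set" and \<tau> :: "'s \<Rightarrow> 'a set \<Rightarrow> real"
  assumes "\<forall>s\<in>S. fuzzifying_topology (Xs s) (\<tau> s)"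
  shows "fsup {min (Gamma U (frestrict (PiE S Xs) (prod_pre S Xs \<tau>) U))
                   (fsup {fsup {prod_pre S Xs \<tau> V | V. x \<in> V \<and> V \<subseteq> U} | x. x \<in> PiE S Xs})
               | U. U \<subseteq> PiE S Xs}
         \<le> fsup {finf {Gamma (Xs t) (preopen (Xs t) (\<tau> t)) | t. t \<in> S - T} | T. finite T \<and> T \<subseteq> S}"
proof -
  have \<tau>: "\<forall>s\<in>S. fuzzy_on_pow (Xs s) (\<tau> s)"
    using assms unfolding fuzzifying_topology_def by blast
  let ?\<Gamma>U = "\<lambda>U. Gamma U (frestrict (PiE S Xs) (prod_pre S Xs \<tau>) U)"
  let ?N = "\<lambda>U. fsup {fsup {prod_pre S Xs \<tau> V | V. x \<in> V \<and> V \<subseteq> U} | x. x \<in> PiE S Xs}"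
  let ?bounds = "{finf {Gamma (Xs t) (preopen (Xs t) (\<tau> t)) | t. t \<in> S - T} | T. finite T \<and> T \<subseteq> S}"
  have bounds_unit: "?bounds \<subseteq> {0..1}"
    using \<tau> by (auto intro!: finf_in_unit Gamma_in_unit fuzzy_on_pow_preopen)
  show ?thesis
  proof (rule fsup_least)
    fix a assume "a \<in> {min (?\<Gamma>U U) (?N U) | U. U \<subseteq> PiE S Xs}"
    then obtain U where a: "a = min (?\<Gamma>U U) (?N U)" and U: "U \<subseteq> PiE S Xs" by blast
    show "a \<le> fsup ?bounds"
    proof (cases "0 < ?N U")
      case True
      then obtain T where "finite T" "T \<subseteq> S"
        and "?\<Gamma>U U \<le> finf {Gamma (Xs t) (preopen (Xs t) (\<tau> t)) | t. t \<in> S - T}"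
        using Gamma_subspace_le_cofinite_factors[OF \<tau> U] by blast
      then have "?\<Gamma>U U \<le> fsup ?bounds"
        using fsup_upper[OF _ bounds_unit] by (blast intro: order_trans)
      then show ?thesis unfolding a by linarith
    qed (use fsup_in_unit[OF bounds_unit] a in auto)
  qed (use fsup_in_unit[OF bounds_unit] in auto)
qed

end
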